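(* Let $\mathbf{X}$ be an isotropic unimodal Lévy process on $\mathbb{R}^d$ with Lévy–Khintchine exponent $\psi$. There exist $c\in(0,1]$, $\alpha>0$ and $\theta\ge0$ such that $\psi\in\mathrm{WLSC}(\alpha,\theta,c)$ if and only if \[ \liminf_{r\to0^+}\frac{K_d(r)}{h(r)}>0. \] In particular, if this $\liminf$ is positive then $\psi$ is not slowly varying at infinity.
   Context: An isotropic unimodal Lévy process on $\mathbb{R}^d$ is a pure-jump Lévy process with $\mathbb{E}e^{i\langle\xi,X_t\rangle}=e^{-t\psi(\xi)}$, $\psi(\xi)=\int_{\mathbb{R}^d}(1-\cos\langle\xi,x\rangle)\nu(x)\,\mathrm{d}x$, $\nu$ radial and radially non-increasing; $\psi$ is radial and written $\psi(r)$. For $r>0$: $h(r)=\int_{\mathbb{R}^d}\min\{1,r^{-2}|y|^2\}\nu(y)\,\mathrm{d}y$, $K_d(r)=r^{-2}\int_{|y|\le r}|y|^2\nu(y)\,\mathrm{d}y$. A function $f:[0,\infty)\to[0,\infty)$ belongs to $\mathrm{WLSC}(\alpha,x_0,c)$ (weak lower scaling at infinity) if $f(\lambda x)\ge c\lambda^\alpha f(x)$ for all $\lambda>1$ and $x>x_0$. *)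

theory Defs
  imports "HOL-Analysis.Analysis"
begin

text \<open>A Levy density nu on a Euclidean space of dimension d = DIM('a) defining an
isotropic unimodal pure-jump Levy process: nonnegative, measurable, radial,
radially non-increasing (on the punctured space), satisfying the Levy condition,
and not identically zero (non-degenerate process).\<close>
definition isotropic_unimodal_levy_density :: "('a::euclidean_space \<Rightarrow> real) \<Rightarrow> bool" where
  "isotropic_unimodal_levy_density \<nu> \<longleftrightarrow>
     \<nu> \<in> borel_measurable lborel \<and>
     (\<forall>x. 0 \<le> \<nu> x) \<and>
     (\<forall>x y. norm x = norm y \<longrightarrow> \<nu> x = \<nu> y) \<and>
     (\<forall>x y. 0 < norm x \<longrightarrow> norm x \<le> norm y \<longrightarrow> \<nu> y \<le> \<nu> x) \<and>
     integrable lborel (\<lambda>y. min 1 (norm y ^ 2) * \<nu> y) \<and>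
     (\<exists>x. x \<noteq> 0 \<and> \<nu> x > 0)"

definition levy_exponent :: "('a::euclidean_space \<Rightarrow> real) \<Rightarrow> 'a \<Rightarrow> real" where
  "levy_exponent \<nu> \<xi> = (\<integral>x. (1 - cos (\<xi> \<bullet> x)) * \<nu> x \<partial>lborel)"

definition psi_radial :: "('a::euclidean_space \<Rightarrow> real) \<Rightarrow> real \<Rightarrow> real" where
  "psi_radial \<nu> r = levy_exponent \<nu> (r *\<^sub>R (SOME u. u \<in> (Basis :: 'a set)))"

definition h_fun :: "('a::euclidean_space \<Rightarrow> real) \<Rightarrow> real \<Rightarrow> real" where
  "h_fun \<nu> r = (\<integral>y. min 1 (norm y ^ 2 / r ^ 2) * \<nu> y \<partial>lborel)"

definition K_fun :: "('a::euclidean_space \<Rightarrow> real) \<Rightarrow> real \<Rightarrow> real" where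
  "K_fun \<nu> r = (\<integral>y. indicator (cball 0 r) y * (norm y ^ 2 * \<nu> y) \<partial>lborel) / r ^ 2"

definition WLSC :: "(real \<Rightarrow> real) \<Rightarrow> real \<Rightarrow> real \<Rightarrow> real \<Rightarrow> bool" where
  "WLSC f \<alpha> x0 c \<longleftrightarrow> (\<forall>t x. t > 1 \<longrightarrow> x > x0 \<longrightarrow> f (t * x) \<ge> c * t powr \<alpha> * f x)"

definition slowly_varying_at_infinity :: "(real \<Rightarrow> real) \<Rightarrow> bool" where
  "slowly_varying_at_infinity f \<longleftrightarrow>
     (\<forall>t>0. ((\<lambda>x. f (t * x) / f x) \<longlongrightarrow> 1) at_top)"

end

theory Submission
  imports Defs
begin

text \<open>The exponent psi(x) and h(1/x) are comparable with constants depending only on the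
  dimension d. The upper bound follows from 1 - cos t <= 2 min(1, t^2). For the lower bound,
  min(1, x^2 |y|^2) is split along the coordinate directions; by isotropy each direction
  contributes psi(x), the cosine handling the range |x y_b| < pi and a translation by pi/x in
  direction b (which flips the cosine and, by unimodality, can only increase the density)
  handling the tail. So WLSC of psi is WLSC of h(1/.).

  Comparing integrands gives h(r) + (1 - s^2/r^2) K(s) <= h(s) <= h(r) + (r/s)^2 K(r) for
  s <= r. If K >= eps h near 0, halving the radius multiplies h by at least 1 + 3 eps/4, which
  iterates to lower scaling. Conversely, lower scaling yields a lambda with h(r/lambda) >= 2 h(r),
  hence h(r) <= lambda^2 K(r). Finally lower scaling with positive exponent gives
  psi(lambda x) >= 2 psi(x) for large x, so psi is not slowly varying.\<close>

lemma cos_le_Maclaurin_4: "cos t \<le> 1 - t\<^sup>2 / 2 + t ^ 4 / 24" for t :: real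
proof -
  obtain s where "cos t = (\<Sum>m<4. cos_coeff m * t ^ m) + (cos (s + 1/2 * real 4 * pi) / fact 4) * t ^ 4"
    using Maclaurin_cos_expansion[of t 4] by blast
  moreover have "(\<Sum>m<4. cos_coeff m * t ^ m) = 1 - t\<^sup>2 / 2"
    by (simp add: lessThan_nat_numeral cos_coeff_def)
  moreover have "cos (s + 1/2 * real 4 * pi) * t ^ 4 \<le> t ^ 4"
    using mult_right_mono[of "cos (s + 1/2 * real 4 * pi)" 1 "t ^ 4"] by simp
  ultimately show ?thesis by (simp add: fact_numeral)
qed

lemma one_minus_cos_le_half_square: "1 - cos t \<le> t\<^sup>2 / 2" for t :: real
proof -
  have "sin (t / 2) ^ 2 \<le> (t / 2)\<^sup>2"
    using abs_sin_x_le_abs_x[of "t / 2"] by (metis abs_ge_zero power2_abs power_mono)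
  then show ?thesis using cos_double_sin[of "t / 2"] by (simp add: power_divide)
qed

lemma one_minus_cos_le_min: "1 - cos t \<le> 2 * min 1 (t\<^sup>2)" for t :: real
proof (cases "t\<^sup>2 \<le> 1")
  case True
  then show ?thesis using one_minus_cos_le_half_square[of t] zero_le_power2[of t] by linarith
qed (use cos_ge_minus_one[of t] in simp)

lemma square_le_one_minus_cos:
  fixes t :: real
  assumes "\<bar>t\<bar> \<le> pi"
  shows "t\<^sup>2 / 12 \<le> 1 - cos t"
proof -
  have "pi\<^sup>2 \<le> 10"
    using pi_approx pi_gt3 power_mono[of pi "3.15" 2] by (simp add: abs_le_iff power2_eq_square)
  moreover have "t\<^sup>2 \<le> pi\<^sup>2"
    using assms by (metis abs_le_square_iff abs_of_nonneg pi_ge_zero)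
  ultimately have "t ^ 4 \<le> 10 * t\<^sup>2"
    using mult_right_mono[of "t\<^sup>2" 10 "t\<^sup>2"] by (simp add: power4_eq_xxxx power2_eq_square)
  then show ?thesis using cos_le_Maclaurin_4[of t] by linarith
qed

lemma min_one_mult_le:
  fixes a b :: real
  assumes "0 \<le> a" "0 \<le> b"
  shows "min 1 (a * b) \<le> max 1 a * min 1 b"
proof (cases "a \<le> 1")
  case True
  then show ?thesis using assms mult_left_le_one_le[of b a] by (auto simp: min_def)
next
  case False
  have "min 1 (a * b) \<le> a * min 1 b"
  proof (cases "b \<le> 1")
    case False
    then show ?thesis using \<open>\<not> a \<le> 1\<close> by (simp add: min.coboundedI1)
  qed (simp add: min_def)
  then show ?thesis using False by simp
qed

text \<open>If the sum is at most 1, each term dominates its square; otherwise some square exceeds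
  the average 1/n and its term is at least 1.\<close>
lemma min_one_sum_squares_le:
  fixes a :: "'i \<Rightarrow> real"
  assumes "finite I" "I \<noteq> {}"
  shows "min 1 (\<Sum>i\<in>I. (a i)\<^sup>2)
           \<le> (\<Sum>i\<in>I. 12 * real (card I) * (1 - cos (a i)) + of_bool (pi \<le> \<bar>a i\<bar>))"
    (is "_ \<le> (\<Sum>i\<in>I. ?T i)")
proof -
  define n where "n = real (card I)"
  have n: "1 \<le> n" using assms by (simp add: n_def Suc_le_eq card_gt_0_iff)
  have T_nonneg: "0 \<le> ?T i" for i using n cos_le_one[of "a i"] by simp
  have T_large: "n * (a i)\<^sup>2 \<le> ?T i" if "\<bar>a i\<bar> < pi" for i
  proof -
    have "n * (a i)\<^sup>2 = 12 * n * ((a i)\<^sup>2 / 12)" by simp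
    also have "\<dots> \<le> 12 * n * (1 - cos (a i))"
      using square_le_one_minus_cos[of "a i"] that n by (intro mult_left_mono) auto
    finally show ?thesis by (simp add: n_def)
  qed
  show ?thesis
  proof (cases "(\<Sum>i\<in>I. (a i)\<^sup>2) \<le> 1")
    case True
    have "(a i)\<^sup>2 \<le> ?T i" if "i \<in> I" for i
    proof -
      have "(a i)\<^sup>2 \<le> 1"
        using True member_le_sum[of i I "\<lambda>i. (a i)\<^sup>2"] that assms(1) by simp
      then have "\<bar>a i\<bar> < pi" using pi_gt3 by (simp add: abs_square_le_1)
      then show ?thesis using T_large[of i] n mult_right_mono[of 1 n "(a i)\<^sup>2"] by simp
    qed
    then have "(\<Sum>i\<in>I. (a i)\<^sup>2) \<le> (\<Sum>i\<in>I. ?T i)" by (rule sum_mono)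
    then show ?thesis by linarith
  next
    case False
    have "\<exists>i\<in>I. 1 / n < (a i)\<^sup>2"
    proof (rule ccontr)
      assume "\<not> ?thesis"
      then have "(\<Sum>i\<in>I. (a i)\<^sup>2) \<le> of_nat (card I) * (1 / n)"
        by (intro sum_bounded_above) (simp add: not_less)
      with False n show False by (simp add: n_def)
    qed
    then obtain i where i: "i \<in> I" "1 / n < (a i)\<^sup>2" by blast
    have "1 \<le> ?T i"
    proof (cases "\<bar>a i\<bar> < pi")
      case True
      then show ?thesis using T_large[of i] i(2) n by (simp add: field_simps)
    qed (simp add: cos_le_one n)
    also have "\<dots> \<le> (\<Sum>i\<in>I. ?T i)"
      using i(1) assms(1) T_nonneg by (intro member_le_sum) auto
    finally show ?thesis by simp
  qed
qed

lemma min_one_divide_square_antimono: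
  fixes a r s :: real
  assumes "0 < s" "s \<le> r" "0 \<le> a"
  shows "min 1 (a / r\<^sup>2) \<le> min 1 (a / s\<^sup>2)"
  using assms by (intro min.mono order.refl divide_left_mono power_mono) auto

lemma min_one_divide_square_add_le:
  fixes b r s :: real
  assumes "0 < s" "s \<le> r" "0 \<le> b"
  shows "min 1 (b\<^sup>2 / r\<^sup>2) + (1 / s\<^sup>2 - 1 / r\<^sup>2) * (of_bool (b \<le> s) * b\<^sup>2) \<le> min 1 (b\<^sup>2 / s\<^sup>2)"
proof (cases "b \<le> s")
  case True
  then have "b\<^sup>2 / r\<^sup>2 \<le> b\<^sup>2 / s\<^sup>2" "b\<^sup>2 / s\<^sup>2 \<le> 1"
    using assms by (auto intro!: divide_left_mono power_mono simp: divide_le_eq_1)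
  then show ?thesis using True by (simp add: algebra_simps)
next
  case False
  then have "1 < b\<^sup>2 / s\<^sup>2" using assms by (simp add: power_strict_mono)
  then show ?thesis using False by simp
qed

lemma min_one_divide_square_le_add:
  fixes b r s :: real
  assumes "0 < s" "s \<le> r" "0 \<le> b"
  shows "min 1 (b\<^sup>2 / s\<^sup>2) \<le> min 1 (b\<^sup>2 / r\<^sup>2) + (r / s)\<^sup>2 * (of_bool (b \<le> r) * b\<^sup>2 / r\<^sup>2)"
proof (cases "b \<le> r")
  case True
  have "(r / s)\<^sup>2 * (b\<^sup>2 / r\<^sup>2) = b\<^sup>2 / s\<^sup>2" using assms by (simp add: field_simps)
  then show ?thesis using True by (simp add: min.coboundedI2)
next
  case False
  then have "1 < b\<^sup>2 / r\<^sup>2" "1 < b\<^sup>2 / s\<^sup>2"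
    using assms by (simp_all add: power_strict_mono)
  then show ?thesis using False by simp
qed

lemma WLSC_transfer:
  assumes "WLSC f \<alpha> \<theta> c" "0 \<le> c" "0 \<le> \<theta>" "0 < A" "0 < B"
    and upper: "\<And>x. \<theta> < x \<Longrightarrow> g x \<le> A * f x"
    and lower: "\<And>x. \<theta> < x \<Longrightarrow> f x \<le> B * g x"
  shows "WLSC g \<alpha> \<theta> (c / (A * B))"
  unfolding WLSC_def
proof (intro allI impI)
  fix t x :: real
  assume t: "1 < t" and x: "\<theta> < x"
  have "0 < x" using x assms(3) by linarith
  then have "x < t * x" using t by simp
  then have tx: "\<theta> < t * x" using x by linarith
  have "c / (A * B) * t powr \<alpha> * g x \<le> c / (A * B) * t powr \<alpha> * (A * f x)"
    using assms upper[OF x] by (intro mult_left_mono) auto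
  also have "\<dots> = (c * t powr \<alpha> * f x) / B" using assms by (simp add: field_simps)
  also have "\<dots> \<le> f (t * x) / B"
    using assms t x unfolding WLSC_def by (intro divide_right_mono) auto
  also have "\<dots> \<le> g (t * x)" using lower[OF tx] assms by (simp add: field_simps)
  finally show "c / (A * B) * t powr \<alpha> * g x \<le> g (t * x)" .
qed

lemma WLSC_of_doubling:
  assumes "1 < q" "0 \<le> \<theta>"
    and mono: "\<And>x y. \<theta> < x \<Longrightarrow> x \<le> y \<Longrightarrow> f x \<le> f y"
    and nonneg: "\<And>x. \<theta> < x \<Longrightarrow> 0 \<le> f x"
    and doubling: "\<And>x. \<theta> < x \<Longrightarrow> q * f x \<le> f (2 * x)"
  shows "WLSC f (log 2 q) \<theta> (1 / q)"
  unfolding WLSC_def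
proof (intro allI impI)
  fix t x :: real
  assume t: "1 < t" and x: "\<theta> < x"
  have "0 < x" using x assms(2) by linarith
  then have "x \<le> 2 ^ k * x" for k by simp
  then have scaled: "\<theta> < 2 ^ k * x" for k using x by (rule order.strict_trans2[rotated])
  have iterate: "q ^ k * f x \<le> f (2 ^ k * x)" for k
  proof (induction k)
    case (Suc k)
    have "q ^ Suc k * f x = q * (q ^ k * f x)" by simp
    also have "\<dots> \<le> q * f (2 ^ k * x)" using Suc.IH assms(1) by simp
    also have "\<dots> \<le> f (2 ^ Suc k * x)" using doubling[OF scaled[of k]] by (simp add: mult.assoc)
    finally show ?case .
  qed simp
  define k where "k = nat \<lfloor>log 2 t\<rfloor>"
  have k: "real k \<le> log 2 t" "log 2 t < real k + 1"
    using t by (simp_all add: k_def)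
  have "(2::real) ^ k = 2 powr real k" by (simp add: powr_realpow)
  also have "\<dots> \<le> 2 powr log 2 t" using k by simp
  finally have "2 ^ k * x \<le> t * x" using t x assms(2) by simp
  have "t powr log 2 q = q powr log 2 t"
    using t assms(1) by (simp add: powr_def log_def)
  also have "\<dots> \<le> q powr (real k + 1)" using k assms(1) by (intro powr_mono) auto
  also have "\<dots> = q * q ^ k" using assms(1) by (simp add: powr_add powr_realpow)
  finally have "t powr log 2 q * f x \<le> q * q ^ k * f x"
    using nonneg[OF x] by (rule mult_right_mono)
  then have "1 / q * t powr log 2 q * f x \<le> q ^ k * f x"
    using assms(1) by (simp add: field_simps)
  also have "\<dots> \<le> f (2 ^ k * x)" by (rule iterate)
  also have "\<dots> \<le> f (t * x)" using mono[OF scaled \<open>2 ^ k * x \<le> t * x\<close>] .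
  finally show "1 / q * t powr log 2 q * f x \<le> f (t * x)" .
qed

lemma WLSC_amplifies:
  assumes "WLSC f \<alpha> \<theta> c" "0 < c" "0 < \<alpha>" "\<And>x. \<theta> < x \<Longrightarrow> 0 \<le> f x"
  obtains \<kappa> where "1 < \<kappa>" "\<And>x. \<theta> < x \<Longrightarrow> M * f x \<le> f (\<kappa> * x)"
proof
  define \<kappa> where "\<kappa> = max 2 ((max 1 M / c) powr (1 / \<alpha>))"
  show "1 < \<kappa>" by (simp add: \<kappa>_def)
  have "max 1 M / c = ((max 1 M / c) powr (1 / \<alpha>)) powr \<alpha>"
    using assms by (simp add: powr_powr)
  also have "\<dots> \<le> \<kappa> powr \<alpha>"
    using assms by (intro powr_mono2) (auto simp: \<kappa>_def)
  finally have M: "M \<le> c * \<kappa> powr \<alpha>" using assms by (simp add: field_simps)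
  fix x assume "\<theta> < x"
  then have "M * f x \<le> c * \<kappa> powr \<alpha> * f x" using M assms(4) by (simp add: mult_right_mono)
  also have "\<dots> \<le> f (\<kappa> * x)"
    using assms(1) \<open>1 < \<kappa>\<close> \<open>\<theta> < x\<close> unfolding WLSC_def by blast
  finally show "M * f x \<le> f (\<kappa> * x)" .
qed

lemma WLSC_not_slowly_varying:
  assumes "WLSC f \<alpha> \<theta> c" "0 < c" "0 < \<alpha>" and pos: "\<And>x. \<theta> < x \<Longrightarrow> 0 < f x"
  shows "\<not> slowly_varying_at_infinity f"
proof
  obtain \<kappa> where \<kappa>: "1 < \<kappa>" "\<And>x. \<theta> < x \<Longrightarrow> 2 * f x \<le> f (\<kappa> * x)"
    using WLSC_amplifies[OF assms(1-3)] pos less_imp_le by metis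
  assume "slowly_varying_at_infinity f"
  then have "((\<lambda>x. f (\<kappa> * x) / f x) \<longlongrightarrow> 1) at_top"
    using \<kappa>(1) unfolding slowly_varying_at_infinity_def by simp
  then have "eventually (\<lambda>x. f (\<kappa> * x) / f x < 2) at_top"
    by (rule order_tendstoD) simp
  moreover have "eventually (\<lambda>x. 2 \<le> f (\<kappa> * x) / f x) at_top"
    using eventually_gt_at_top[of \<theta>] by eventually_elim (use \<kappa>(2) pos in \<open>simp add: pos_le_divide_eq\<close>)
  ultimately have "eventually (\<lambda>_. False) (at_top :: real filter)"
    by eventually_elim simp
  then show False by simp
qed

definition swap_coords :: "'a \<Rightarrow> 'a \<Rightarrow> 'a \<Rightarrow> 'a::euclidean_space" where
  "swap_coords b e y = (\<Sum>j\<in>Basis. (y \<bullet> Transposition.transpose b e j) *\<^sub>R j)"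

lemma inner_swap_coords: "j \<in> Basis \<Longrightarrow> swap_coords b e y \<bullet> j = y \<bullet> Transposition.transpose b e j"
  unfolding swap_coords_def by (simp add: inner_sum_left inner_Basis if_distrib cong: if_cong)

context
  fixes b e :: "'a::euclidean_space"
  assumes b: "b \<in> Basis" and e: "e \<in> Basis"
begin

lemma bij_betw_transpose_Basis: "bij_betw (Transposition.transpose b e) Basis Basis"
  using b e by simp

lemma sum_Basis_transpose: "(\<Sum>j\<in>Basis. f (Transposition.transpose b e j)) = (\<Sum>j\<in>Basis. f j)"
  using bij_betw_transpose_Basis by (rule sum.reindex_bij_betw)

lemma prod_Basis_transpose: "(\<Prod>j\<in>Basis. f (Transposition.transpose b e j)) = (\<Prod>j\<in>Basis. f j)"
  using bij_betw_transpose_Basis by (rule prod.reindex_bij_betw)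

lemma ball_Basis_transpose: "(\<forall>j\<in>Basis. P (Transposition.transpose b e j)) \<longleftrightarrow> (\<forall>j\<in>Basis. P j)"
proof -
  have "Transposition.transpose b e ` Basis = Basis" using b e by simp
  then show ?thesis by (metis ball_simps(9))
qed

lemma norm_swap_coords: "norm (swap_coords b e y) = norm y"
proof -
  have "swap_coords b e y \<bullet> swap_coords b e y = (\<Sum>j\<in>Basis. (swap_coords b e y \<bullet> j) * (swap_coords b e y \<bullet> j))"
    by (rule euclidean_inner)
  also have "\<dots> = (\<Sum>j\<in>Basis. (y \<bullet> Transposition.transpose b e j) * (y \<bullet> Transposition.transpose b e j))"
    by (simp add: inner_swap_coords)
  also have "\<dots> = (\<Sum>j\<in>Basis. (y \<bullet> j) * (y \<bullet> j))"
    by (rule sum_Basis_transpose)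
  also have "\<dots> = y \<bullet> y"
    by (rule euclidean_inner[symmetric])
  finally show ?thesis by (simp add: norm_eq_sqrt_inner)
qed

lemma swap_coords_measurable [measurable]: "swap_coords b e \<in> borel_measurable borel"
  unfolding swap_coords_def by (intro borel_measurable_continuous_onI continuous_intros)

lemma lborel_distr_swap_coords: "distr lborel borel (swap_coords b e) = (lborel :: 'a measure)"
proof (rule lborel_eqI[symmetric])
  fix l u :: 'a assume le: "\<And>j. j \<in> Basis \<Longrightarrow> l \<bullet> j \<le> u \<bullet> j"
  have "swap_coords b e -` box l u = box (swap_coords b e l) (swap_coords b e u)"
  proof -
    have "y \<in> swap_coords b e -` box l u \<longleftrightarrow> y \<in> box (swap_coords b e l) (swap_coords b e u)" for y
    proof -
      have "y \<in> swap_coords b e -` box l u \<longleftrightarrow>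
              (\<forall>j\<in>Basis. l \<bullet> j < y \<bullet> Transposition.transpose b e j \<and> y \<bullet> Transposition.transpose b e j < u \<bullet> j)"
        by (simp add: mem_box inner_swap_coords)
      also have "\<dots> \<longleftrightarrow> (\<forall>j\<in>Basis. l \<bullet> Transposition.transpose b e j < y \<bullet> j \<and> y \<bullet> j < u \<bullet> Transposition.transpose b e j)"
        using ball_Basis_transpose[of "\<lambda>j. l \<bullet> j < y \<bullet> Transposition.transpose b e j \<and> y \<bullet> Transposition.transpose b e j < u \<bullet> j"]
        by simp
      finally show ?thesis by (simp add: mem_box inner_swap_coords)
    qed
    then show ?thesis by blast
  qed
  moreover have "\<forall>j\<in>Basis. swap_coords b e l \<bullet> j \<le> swap_coords b e u \<bullet> j"
    using le bij_betw_apply[OF bij_betw_transpose_Basis] by (simp add: inner_swap_coords)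
  ultimately have "emeasure (distr lborel borel (swap_coords b e)) (box l u)
      = (\<Prod>j\<in>Basis. (u - l) \<bullet> Transposition.transpose b e j)"
    by (simp add: emeasure_distr emeasure_lborel_box_eq inner_diff_left inner_swap_coords)
  then show "emeasure (distr lborel borel (swap_coords b e)) (box l u) = (\<Prod>j\<in>Basis. (u - l) \<bullet> j)"
    by (simp add: prod_Basis_transpose[of "\<lambda>j. (u - l) \<bullet> j"])
qed simp

lemma integral_swap_coords:
  fixes f :: "'a \<Rightarrow> real"
  assumes [measurable]: "f \<in> borel_measurable borel"
  shows "(\<integral>y. f (swap_coords b e y) \<partial>lborel) = (\<integral>y. f y \<partial>lborel)"
  by (subst (2) lborel_distr_swap_coords[symmetric]) (simp add: integral_distr)

end

lemma integral_lborel_translate: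
  fixes f :: "'a::euclidean_space \<Rightarrow> real"
  assumes [measurable]: "f \<in> borel_measurable borel"
  shows "(\<integral>y. f (c + y) \<partial>lborel) = (\<integral>y. f y \<partial>lborel)"
  by (subst (2) lborel_distr_plus[symmetric, of c]) (simp add: integral_distr)

lemma integrable_lborel_translate:
  fixes f :: "'a::euclidean_space \<Rightarrow> real"
  assumes [measurable]: "f \<in> borel_measurable borel" and "integrable lborel f"
  shows "integrable lborel (\<lambda>y. f (c + y))"
  using assms(2) by (subst (asm) lborel_distr_plus[symmetric, of c]) (simp add: integrable_distr_eq)

lemma inner_square_le: "(\<xi> \<bullet> y)\<^sup>2 \<le> (norm \<xi>)\<^sup>2 * (norm y)\<^sup>2"
  for \<xi> y :: "'a::real_inner"
proof -
  have "\<bar>\<xi> \<bullet> y\<bar>\<^sup>2 \<le> (norm \<xi> * norm y)\<^sup>2"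
    using Cauchy_Schwarz_ineq2[of \<xi> y] by (intro power_mono) simp_all
  then show ?thesis by (simp add: power_mult_distrib)
qed

lemma of_bool_pi_le_inner_le: "of_bool (pi \<le> \<bar>\<xi> \<bullet> y\<bar>) \<le> min 1 ((norm \<xi>)\<^sup>2 * (norm y)\<^sup>2)"
  for \<xi> y :: "'a::real_inner"
proof (cases "pi \<le> \<bar>\<xi> \<bullet> y\<bar>")
  case True
  then have "1 \<le> \<bar>\<xi> \<bullet> y\<bar>\<^sup>2" using pi_gt3 by (intro one_le_power) linarith
  then show ?thesis using True inner_square_le[of \<xi> y] by simp
qed simp

lemma sum_Basis_inner_squares: "(\<Sum>b\<in>Basis. (b \<bullet> y)\<^sup>2) = (norm y)\<^sup>2"
  for y :: "'a::euclidean_space"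
proof -
  have "(\<Sum>b\<in>Basis. (b \<bullet> y)\<^sup>2) = y \<bullet> y"
    by (simp add: euclidean_inner[of y y] inner_commute power2_eq_square)
  then show ?thesis by (simp add: power2_norm_eq_inner)
qed

lemma Liminf_ereal_pos_imp_eventually_gt:
  assumes "0 < Liminf F (\<lambda>x. ereal (f x))"
  obtains \<epsilon> where "0 < \<epsilon>" "eventually (\<lambda>x. \<epsilon> < f x) F"
proof -
  obtain z where "0 < ereal z" "ereal z < Liminf F (\<lambda>x. ereal (f x))"
    using ereal_dense2[OF assms] by blast
  then show thesis using less_LiminfD that by fastforce
qed

lemma Liminf_ereal_pos_if_eventually_ge:
  assumes "0 < \<epsilon>" "eventually (\<lambda>x. \<epsilon> \<le> f x) F"
  shows "0 < Liminf F (\<lambda>x. ereal (f x))"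
proof -
  have "ereal \<epsilon> \<le> Liminf F (\<lambda>x. ereal (f x))"
    using assms(2) by (intro Liminf_bounded) simp
  moreover have "0 < ereal \<epsilon>" using assms(1) by simp
  ultimately show ?thesis by (rule order.strict_trans2[rotated])
qed

locale isotropic_unimodal_levy =
  fixes \<nu> :: "'a::euclidean_space \<Rightarrow> real"
  assumes levy_density: "isotropic_unimodal_levy_density \<nu>"
begin

lemma borel_measurable_density [measurable]: "\<nu> \<in> borel_measurable borel"
  using levy_density measurable_cong_sets[OF sets_lborel refl]
  unfolding isotropic_unimodal_levy_density_def by blast

lemma density_nonneg: "0 \<le> \<nu> x"
  using levy_density unfolding isotropic_unimodal_levy_density_def by blast

lemma density_radial: "norm x = norm y \<Longrightarrow> \<nu> x = \<nu> y"
  using levy_density unfolding isotropic_unimodal_levy_density_def by blast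

lemma density_antimono: "0 < norm x \<Longrightarrow> norm x \<le> norm y \<Longrightarrow> \<nu> y \<le> \<nu> x"
  using levy_density unfolding isotropic_unimodal_levy_density_def by blast

lemma density_nontrivial: obtains x where "x \<noteq> 0" "0 < \<nu> x"
  using levy_density unfolding isotropic_unimodal_levy_density_def by blast

lemma integrable_min_one_norm_square: "integrable lborel (\<lambda>y. min 1 ((norm y)\<^sup>2) * \<nu> y)"
  using levy_density unfolding isotropic_unimodal_levy_density_def by blast

lemma integrable_truncated_second_moment:
  assumes "0 \<le> s"
  shows "integrable lborel (\<lambda>y. min 1 (s * (norm y)\<^sup>2) * \<nu> y)"
proof (rule Bochner_Integration.integrable_bound)
  show "integrable lborel (\<lambda>y. max 1 s * (min 1 ((norm y)\<^sup>2) * \<nu> y))"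
    using integrable_min_one_norm_square by (rule integrable_mult_right)
  show "AE y in lborel. norm (min 1 (s * (norm y)\<^sup>2) * \<nu> y) \<le> norm (max 1 s * (min 1 ((norm y)\<^sup>2) * \<nu> y))"
  proof (rule AE_I2)
    fix y :: 'a
    have "min 1 (s * (norm y)\<^sup>2) * \<nu> y \<le> max 1 s * min 1 ((norm y)\<^sup>2) * \<nu> y"
      using min_one_mult_le[OF assms zero_le_power2] density_nonneg by (rule mult_right_mono)
    moreover have "0 \<le> min 1 (s * (norm y)\<^sup>2) * \<nu> y"
      using assms density_nonneg[of y] by simp
    ultimately show "norm (min 1 (s * (norm y)\<^sup>2) * \<nu> y) \<le> norm (max 1 s * (min 1 ((norm y)\<^sup>2) * \<nu> y))"
      by (simp add: mult.assoc)
  qed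
qed measurable

lemma integrable_dominated:
  assumes [measurable]: "f \<in> borel_measurable borel" and "0 \<le> s"
    and bound: "\<And>y. \<bar>f y\<bar> \<le> C * (min 1 (s * (norm y)\<^sup>2) * \<nu> y)"
  shows "integrable lborel f"
proof (rule Bochner_Integration.integrable_bound)
  show "integrable lborel (\<lambda>y. C * (min 1 (s * (norm y)\<^sup>2) * \<nu> y))"
    using integrable_truncated_second_moment[OF assms(2)] by simp
  show "AE y in lborel. norm (f y) \<le> norm (C * (min 1 (s * (norm y)\<^sup>2) * \<nu> y))"
    using bound by (intro AE_I2) (simp add: order_trans[OF _ abs_ge_self])
qed measurable

lemma levy_exponent_integrand_le:
  "(1 - cos (\<xi> \<bullet> y)) * \<nu> y \<le> 2 * (min 1 ((norm \<xi>)\<^sup>2 * (norm y)\<^sup>2) * \<nu> y)"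
proof -
  have "1 - cos (\<xi> \<bullet> y) \<le> 2 * min 1 ((norm \<xi>)\<^sup>2 * (norm y)\<^sup>2)"
    using one_minus_cos_le_min[of "\<xi> \<bullet> y"] inner_square_le[of \<xi> y] by linarith
  then have "(1 - cos (\<xi> \<bullet> y)) * \<nu> y \<le> (2 * min 1 ((norm \<xi>)\<^sup>2 * (norm y)\<^sup>2)) * \<nu> y"
    by (rule mult_right_mono[OF _ density_nonneg])
  then show ?thesis by (simp add: mult.assoc)
qed

lemma integrable_levy_exponent: "integrable lborel (\<lambda>y. (1 - cos (\<xi> \<bullet> y)) * \<nu> y)"
proof (rule integrable_dominated[where C = 2 and s = "(norm \<xi>)\<^sup>2"])
  show "(\<lambda>y. (1 - cos (\<xi> \<bullet> y)) * \<nu> y) \<in> borel_measurable borel" by measurable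
  fix y
  have "0 \<le> (1 - cos (\<xi> \<bullet> y)) * \<nu> y" using density_nonneg[of y] by simp
  then show "\<bar>(1 - cos (\<xi> \<bullet> y)) * \<nu> y\<bar> \<le> 2 * (min 1 ((norm \<xi>)\<^sup>2 * (norm y)\<^sup>2) * \<nu> y)"
    using levy_exponent_integrand_le by simp
qed simp

lemma levy_exponent_nonneg: "0 \<le> levy_exponent \<nu> \<xi>"
  unfolding levy_exponent_def by (intro integral_nonneg_AE AE_I2) (simp add: density_nonneg)

lemma levy_exponent_uminus: "levy_exponent \<nu> (- \<xi>) = levy_exponent \<nu> \<xi>"
  by (simp add: levy_exponent_def)

lemma levy_exponent_le_h_fun:
  assumes "\<xi> \<noteq> 0"
  shows "levy_exponent \<nu> \<xi> \<le> 2 * h_fun \<nu> (1 / norm \<xi>)"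
proof -
  have "levy_exponent \<nu> \<xi> \<le> (\<integral>y. 2 * (min 1 ((norm \<xi>)\<^sup>2 * (norm y)\<^sup>2) * \<nu> y) \<partial>lborel)"
    unfolding levy_exponent_def
  proof (rule integral_mono)
    show "integrable lborel (\<lambda>y. 2 * (min 1 ((norm \<xi>)\<^sup>2 * (norm y)\<^sup>2) * \<nu> y))"
      using integrable_truncated_second_moment[of "(norm \<xi>)\<^sup>2"] by simp
  qed (rule integrable_levy_exponent, rule levy_exponent_integrand_le)
  also have "\<dots> = 2 * h_fun \<nu> (1 / norm \<xi>)"
    using assms by (simp add: h_fun_def power_divide mult.commute)
  finally show ?thesis .
qed

lemma levy_exponent_swap_coords:
  assumes "b \<in> Basis" "e \<in> Basis"
  shows "levy_exponent \<nu> (x *\<^sub>R b) = levy_exponent \<nu> (x *\<^sub>R e)"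
proof -
  let ?g = "\<lambda>y. (1 - cos ((x *\<^sub>R e) \<bullet> y)) * \<nu> y"
  have "?g (swap_coords b e y) = (1 - cos ((x *\<^sub>R b) \<bullet> y)) * \<nu> y" for y
  proof -
    have "(x *\<^sub>R e) \<bullet> swap_coords b e y = (x *\<^sub>R b) \<bullet> y"
      using inner_swap_coords[OF assms(2), of b e y] by (simp add: inner_commute)
    moreover have "\<nu> (swap_coords b e y) = \<nu> y"
      by (rule density_radial[OF norm_swap_coords[OF assms]])
    ultimately show ?thesis by (simp only:)
  qed
  then have "levy_exponent \<nu> (x *\<^sub>R b) = (\<integral>y. ?g (swap_coords b e y) \<partial>lborel)"
    by (simp add: levy_exponent_def)
  also have "\<dots> = levy_exponent \<nu> (x *\<^sub>R e)"
    unfolding levy_exponent_def by (rule integral_swap_coords[OF assms]) measurable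
  finally show ?thesis .
qed

lemma psi_radial_eq_levy_exponent:
  "b \<in> Basis \<Longrightarrow> psi_radial \<nu> x = levy_exponent \<nu> (x *\<^sub>R b)"
  unfolding psi_radial_def by (rule levy_exponent_swap_coords[OF SOME_Basis])

lemma integrable_slab_complement: "integrable lborel (\<lambda>y. of_bool (pi \<le> \<bar>\<xi> \<bullet> y\<bar>) * \<nu> y)"
proof (rule integrable_dominated[where C = 1 and s = "(norm \<xi>)\<^sup>2"])
  show "(\<lambda>y. of_bool (pi \<le> \<bar>\<xi> \<bullet> y\<bar>) * \<nu> y) \<in> borel_measurable borel" by measurable
  fix y
  show "\<bar>of_bool (pi \<le> \<bar>\<xi> \<bullet> y\<bar>) * \<nu> y\<bar> \<le> 1 * (min 1 ((norm \<xi>)\<^sup>2 * (norm y)\<^sup>2) * \<nu> y)"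
  proof -
    have "0 \<le> of_bool (pi \<le> \<bar>\<xi> \<bullet> y\<bar>) * \<nu> y" using density_nonneg[of y] by simp
    moreover have "of_bool (pi \<le> \<bar>\<xi> \<bullet> y\<bar>) * \<nu> y \<le> min 1 ((norm \<xi>)\<^sup>2 * (norm y)\<^sup>2) * \<nu> y"
      by (rule mult_right_mono[OF of_bool_pi_le_inner_le density_nonneg])
    ultimately show ?thesis by (simp only: abs_of_nonneg mult_1)
  qed
qed simp

lemma integrable_half_space: "integrable lborel (\<lambda>y. of_bool (pi \<le> \<xi> \<bullet> y) * \<nu> y)"
proof (rule Bochner_Integration.integrable_bound[OF integrable_slab_complement[of \<xi>]])
  show "AE y in lborel. norm (of_bool (pi \<le> \<xi> \<bullet> y) * \<nu> y) \<le> norm (of_bool (pi \<le> \<bar>\<xi> \<bullet> y\<bar>) * \<nu> y)"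
    using density_nonneg by (intro AE_I2) auto
qed measurable

text \<open>Translating by w flips the sign of the cosine and, on the half-space, does not increase
  the norm, so there the radially non-increasing density can only grow.\<close>
lemma density_le_translated_levy_integrands:
  assumes "\<xi> \<noteq> 0" "pi \<le> \<xi> \<bullet> y"
  defines "w \<equiv> (pi / (\<xi> \<bullet> \<xi>)) *\<^sub>R \<xi>"
  shows "2 * \<nu> y \<le> (1 - cos (\<xi> \<bullet> y)) * \<nu> y + (1 - cos (\<xi> \<bullet> (y - w))) * \<nu> (y - w)"
proof -
  have \<xi>w: "\<xi> \<bullet> w = pi" "w \<bullet> w = pi / (\<xi> \<bullet> \<xi>) * pi"
    using assms(1) by (simp_all add: w_def)
  have cos_shift: "cos (\<xi> \<bullet> (y - w)) = - cos (\<xi> \<bullet> y)"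
    using \<xi>w by (simp add: inner_diff_right cos_diff)
  have "0 \<le> pi / (\<xi> \<bullet> \<xi>)" by simp
  then have "w \<bullet> w \<le> pi / (\<xi> \<bullet> \<xi>) * (\<xi> \<bullet> y)"
    using \<xi>w(2) assms(2) by (simp only: mult_left_mono)
  then have "w \<bullet> w \<le> w \<bullet> y" by (simp add: w_def)
  moreover have "(y - w) \<bullet> (y - w) = y \<bullet> y - 2 * (w \<bullet> y) + w \<bullet> w"
    by (simp add: inner_diff_left inner_diff_right inner_commute)
  ultimately have "(y - w) \<bullet> (y - w) \<le> y \<bullet> y"
    using inner_ge_zero[of w] by linarith
  then have norm_le: "norm (y - w) \<le> norm y" by (simp add: norm_le)
  have "(1 + cos (\<xi> \<bullet> y)) * \<nu> y \<le> (1 + cos (\<xi> \<bullet> y)) * \<nu> (y - w)"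
  proof (cases "y = w")
    case True
    then show ?thesis using \<xi>w by simp
  next
    case False
    have "0 \<le> 1 + cos (\<xi> \<bullet> y)" using cos_ge_minus_one[of "\<xi> \<bullet> y"] by linarith
    then show ?thesis
      using density_antimono[OF _ norm_le] False by (intro mult_left_mono) auto
  qed
  then show ?thesis unfolding cos_shift by (simp add: algebra_simps)
qed

lemma integral_half_space_le_levy_exponent:
  "(\<integral>y. of_bool (pi \<le> \<xi> \<bullet> y) * \<nu> y \<partial>lborel) \<le> levy_exponent \<nu> \<xi>"
proof (cases "\<xi> = 0")
  case True
  moreover have "\<not> pi \<le> 0" using pi_gt_zero by linarith
  ultimately show ?thesis using levy_exponent_nonneg[of \<xi>] by simp
next
  case False
  define w where "w = (pi / (\<xi> \<bullet> \<xi>)) *\<^sub>R \<xi>"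
  define g where "g y = (1 - cos (\<xi> \<bullet> y)) * \<nu> y" for y
  have [measurable]: "g \<in> borel_measurable borel" unfolding g_def by measurable
  have integrable_g: "integrable lborel g"
    unfolding g_def by (rule integrable_levy_exponent)
  have g_nonneg: "0 \<le> g y" for y unfolding g_def using density_nonneg[of y] by simp
  have "of_bool (pi \<le> \<xi> \<bullet> y) * \<nu> y \<le> g y / 2 + g (- w + y) / 2" for y
  proof (cases "pi \<le> \<xi> \<bullet> y")
    case True
    then show ?thesis
      using density_le_translated_levy_integrands[OF False True] by (simp add: g_def w_def)
  qed (simp add: g_nonneg)
  then have "(\<integral>y. of_bool (pi \<le> \<xi> \<bullet> y) * \<nu> y \<partial>lborel) \<le> (\<integral>y. g y / 2 + g (- w + y) / 2 \<partial>lborel)"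
    using integrable_half_space integrable_g integrable_lborel_translate[of g "- w"]
    by (intro integral_mono) auto
  also have "\<dots> = (\<integral>y. g y \<partial>lborel) / 2 + (\<integral>y. g (- w + y) \<partial>lborel) / 2"
    using integrable_g integrable_lborel_translate[of g "- w"] by simp
  also have "(\<integral>y. g (- w + y) \<partial>lborel) = (\<integral>y. g y \<partial>lborel)"
    by (rule integral_lborel_translate) measurable
  also have "(\<integral>y. g y \<partial>lborel) = levy_exponent \<nu> \<xi>"
    by (simp add: levy_exponent_def g_def)
  finally show ?thesis by simp
qed

lemma integral_slab_complement_le_levy_exponent:
  "(\<integral>y. of_bool (pi \<le> \<bar>\<xi> \<bullet> y\<bar>) * \<nu> y \<partial>lborel) \<le> 2 * levy_exponent \<nu> \<xi>"
proof -
  have "(\<integral>y. of_bool (pi \<le> \<bar>\<xi> \<bullet> y\<bar>) * \<nu> y \<partial>lborel)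
      \<le> (\<integral>y. of_bool (pi \<le> \<xi> \<bullet> y) * \<nu> y + of_bool (pi \<le> (- \<xi>) \<bullet> y) * \<nu> y \<partial>lborel)"
  proof (rule integral_mono)
    show "integrable lborel (\<lambda>y. of_bool (pi \<le> \<xi> \<bullet> y) * \<nu> y + of_bool (pi \<le> (- \<xi>) \<bullet> y) * \<nu> y)"
      using integrable_half_space integrable_half_space by (rule Bochner_Integration.integrable_add)
  qed (use integrable_slab_complement density_nonneg in \<open>auto simp: abs_if\<close>)
  also have "\<dots> = (\<integral>y. of_bool (pi \<le> \<xi> \<bullet> y) * \<nu> y \<partial>lborel)
      + (\<integral>y. of_bool (pi \<le> (- \<xi>) \<bullet> y) * \<nu> y \<partial>lborel)"
    by (rule Bochner_Integration.integral_add[OF integrable_half_space integrable_half_space])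
  also have "\<dots> \<le> levy_exponent \<nu> \<xi> + levy_exponent \<nu> (- \<xi>)"
    by (intro add_mono integral_half_space_le_levy_exponent)
  finally show ?thesis by (simp add: levy_exponent_uminus)
qed

lemma psi_radial_le_h_fun:
  assumes "0 < x"
  shows "psi_radial \<nu> x \<le> 2 * h_fun \<nu> (1 / x)"
proof -
  let ?e = "SOME u. u \<in> (Basis :: 'a set)"
  have "x *\<^sub>R ?e \<noteq> 0" "norm (x *\<^sub>R ?e) = x"
    using assms SOME_Basis nonzero_Basis by auto
  then show ?thesis using levy_exponent_le_h_fun[of "x *\<^sub>R ?e"] by (simp add: psi_radial_def)
qed

lemma integrable_direction_term:
  "integrable lborel (\<lambda>y. (c * (1 - cos (\<xi> \<bullet> y)) + of_bool (pi \<le> \<bar>\<xi> \<bullet> y\<bar>)) * \<nu> y)"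
  unfolding distrib_right mult.assoc
  by (intro Bochner_Integration.integrable_add integrable_mult_right integrable_levy_exponent
      integrable_slab_complement)

lemma integral_direction_term_le:
  assumes "0 \<le> c"
  shows "(\<integral>y. (c * (1 - cos (\<xi> \<bullet> y)) + of_bool (pi \<le> \<bar>\<xi> \<bullet> y\<bar>)) * \<nu> y \<partial>lborel)
           \<le> (c + 2) * levy_exponent \<nu> \<xi>"
proof -
  have "(\<integral>y. (c * (1 - cos (\<xi> \<bullet> y)) + of_bool (pi \<le> \<bar>\<xi> \<bullet> y\<bar>)) * \<nu> y \<partial>lborel)
      = c * levy_exponent \<nu> \<xi> + (\<integral>y. of_bool (pi \<le> \<bar>\<xi> \<bullet> y\<bar>) * \<nu> y \<partial>lborel)"
    unfolding distrib_right mult.assoc levy_exponent_def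
    using integrable_levy_exponent[of \<xi>] integrable_slab_complement[of \<xi>] by simp
  then show ?thesis
    using integral_slab_complement_le_levy_exponent[of \<xi>] by (simp add: algebra_simps)
qed

lemma h_fun_le_psi_radial:
  assumes "0 < x"
  shows "h_fun \<nu> (1 / x) \<le> real DIM('a) * (12 * real DIM('a) + 2) * psi_radial \<nu> x"
proof -
  define n where "n = real DIM('a)"
  define T where "T b y = (12 * n * (1 - cos ((x *\<^sub>R b) \<bullet> y))
                           + of_bool (pi \<le> \<bar>(x *\<^sub>R b) \<bullet> y\<bar>)) * \<nu> y" for b y
  have "h_fun \<nu> (1 / x) \<le> (\<integral>y. (\<Sum>b\<in>Basis. T b y) \<partial>lborel)"
    unfolding h_fun_def
  proof (rule integral_mono)
    show "integrable lborel (\<lambda>y. min 1 ((norm y)\<^sup>2 / (1 / x)\<^sup>2) * \<nu> y)"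
      using integrable_truncated_second_moment[of "x\<^sup>2"] by (simp add: power_divide mult.commute)
    show "integrable lborel (\<lambda>y. \<Sum>b\<in>Basis. T b y)"
      unfolding T_def by (intro Bochner_Integration.integrable_sum integrable_direction_term)
    fix y :: 'a
    have "(\<Sum>b\<in>Basis. ((x *\<^sub>R b) \<bullet> y)\<^sup>2) = x\<^sup>2 * (\<Sum>b\<in>Basis. (b \<bullet> y)\<^sup>2)"
      by (simp add: power_mult_distrib sum_distrib_left)
    then have "(norm y)\<^sup>2 / (1 / x)\<^sup>2 = (\<Sum>b\<in>Basis. ((x *\<^sub>R b) \<bullet> y)\<^sup>2)"
      by (simp add: sum_Basis_inner_squares power_divide)
    then have "min 1 ((norm y)\<^sup>2 / (1 / x)\<^sup>2) * \<nu> y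
        \<le> (\<Sum>b\<in>Basis. 12 * n * (1 - cos ((x *\<^sub>R b) \<bullet> y)) + of_bool (pi \<le> \<bar>(x *\<^sub>R b) \<bullet> y\<bar>)) * \<nu> y"
      using min_one_sum_squares_le[of Basis "\<lambda>b. (x *\<^sub>R b) \<bullet> y"]
      by (simp add: n_def mult_right_mono density_nonneg)
    then show "min 1 ((norm y)\<^sup>2 / (1 / x)\<^sup>2) * \<nu> y \<le> (\<Sum>b\<in>Basis. T b y)"
      by (simp only: T_def sum_distrib_right)
  qed
  also have "\<dots> = (\<Sum>b\<in>Basis. (\<integral>y. T b y \<partial>lborel))"
    unfolding T_def by (intro Bochner_Integration.integral_sum integrable_direction_term)
  also have "\<dots> \<le> (\<Sum>b\<in>(Basis :: 'a set). (12 * n + 2) * psi_radial \<nu> x)"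
  proof (rule sum_mono)
    fix b :: 'a assume b: "b \<in> Basis"
    show "(\<integral>y. T b y \<partial>lborel) \<le> (12 * n + 2) * psi_radial \<nu> x"
      unfolding T_def psi_radial_eq_levy_exponent[OF b]
      by (intro integral_direction_term_le) (simp add: n_def)
  qed
  finally show ?thesis by (simp add: n_def)
qed

lemma integrable_h_fun: "integrable lborel (\<lambda>y. min 1 ((norm y)\<^sup>2 / r\<^sup>2) * \<nu> y)"
  using integrable_truncated_second_moment[of "1 / r\<^sup>2"] by simp

lemma integrable_K_fun:
  assumes "0 < r"
  shows "integrable lborel (\<lambda>y. indicator (cball 0 r) y * ((norm y)\<^sup>2 * \<nu> y))"
proof (rule integrable_dominated[where C = "r\<^sup>2" and s = "1 / r\<^sup>2"])
  show "(\<lambda>y. indicator (cball 0 r) y * ((norm y)\<^sup>2 * \<nu> y)) \<in> borel_measurable borel"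
    by (intro borel_measurable_times borel_measurable_indicator borel_measurable_power
        borel_measurable_norm borel_measurable_density measurable_ident_sets) simp_all
  fix y :: 'a
  have "indicator (cball 0 r) y * (norm y)\<^sup>2 \<le> r\<^sup>2 * min 1 (1 / r\<^sup>2 * (norm y)\<^sup>2)"
    using assms by (auto simp: indicator_def field_simps power_mono)
  then show "\<bar>indicator (cball 0 r) y * ((norm y)\<^sup>2 * \<nu> y)\<bar> \<le> r\<^sup>2 * (min 1 (1 / r\<^sup>2 * (norm y)\<^sup>2) * \<nu> y)"
    using density_nonneg[of y] mult_right_mono by (fastforce simp: abs_mult mult.assoc[symmetric])
qed simp

lemma h_fun_nonneg: "0 \<le> h_fun \<nu> r"
  unfolding h_fun_def by (intro integral_nonneg_AE AE_I2) (simp add: density_nonneg)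

lemma h_fun_antimono:
  assumes "0 < s" "s \<le> r"
  shows "h_fun \<nu> r \<le> h_fun \<nu> s"
  unfolding h_fun_def using integrable_h_fun
  by (intro integral_mono mult_right_mono min_one_divide_square_antimono[OF assms]) (simp_all add: density_nonneg)

lemma h_fun_add_K_fun_le:
  assumes "0 < s" "s \<le> r"
  shows "h_fun \<nu> r + (1 - s\<^sup>2 / r\<^sup>2) * K_fun \<nu> s \<le> h_fun \<nu> s"
proof -
  let ?k = "\<lambda>y. indicator (cball 0 s) y * ((norm y)\<^sup>2 * \<nu> y)"
  have "(\<integral>y. min 1 ((norm y)\<^sup>2 / r\<^sup>2) * \<nu> y + (1 / s\<^sup>2 - 1 / r\<^sup>2) * ?k y \<partial>lborel)
      \<le> (\<integral>y. min 1 ((norm y)\<^sup>2 / s\<^sup>2) * \<nu> y \<partial>lborel)"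
  proof (rule integral_mono)
    show "integrable lborel (\<lambda>y. min 1 ((norm y)\<^sup>2 / r\<^sup>2) * \<nu> y + (1 / s\<^sup>2 - 1 / r\<^sup>2) * ?k y)"
      using integrable_h_fun integrable_K_fun[OF assms(1)] by simp
    fix y :: 'a
    have "(min 1 ((norm y)\<^sup>2 / r\<^sup>2) + (1 / s\<^sup>2 - 1 / r\<^sup>2) * (of_bool (norm y \<le> s) * (norm y)\<^sup>2)) * \<nu> y
        \<le> min 1 ((norm y)\<^sup>2 / s\<^sup>2) * \<nu> y"
      using min_one_divide_square_add_le[OF assms norm_ge_zero] by (rule mult_right_mono[OF _ density_nonneg])
    then show "min 1 ((norm y)\<^sup>2 / r\<^sup>2) * \<nu> y + (1 / s\<^sup>2 - 1 / r\<^sup>2) * ?k y \<le> min 1 ((norm y)\<^sup>2 / s\<^sup>2) * \<nu> y"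
      by (simp add: indicator_def algebra_simps)
  qed (rule integrable_h_fun)
  moreover have "(1 / s\<^sup>2 - 1 / r\<^sup>2) * (\<integral>y. ?k y \<partial>lborel) = (1 - s\<^sup>2 / r\<^sup>2) * K_fun \<nu> s"
    using assms by (simp add: K_fun_def field_simps)
  ultimately show ?thesis
    using integrable_h_fun integrable_K_fun[OF assms(1)] by (simp add: h_fun_def)
qed

lemma h_fun_le_add_K_fun:
  assumes "0 < s" "s \<le> r"
  shows "h_fun \<nu> s \<le> h_fun \<nu> r + (r / s)\<^sup>2 * K_fun \<nu> r"
proof -
  have r: "0 < r" using assms by simp
  let ?k = "\<lambda>y. indicator (cball 0 r) y * ((norm y)\<^sup>2 * \<nu> y)"
  have "h_fun \<nu> s \<le> (\<integral>y. min 1 ((norm y)\<^sup>2 / r\<^sup>2) * \<nu> y + (r / s)\<^sup>2 / r\<^sup>2 * ?k y \<partial>lborel)"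
    unfolding h_fun_def
  proof (rule integral_mono)
    show "integrable lborel (\<lambda>y. min 1 ((norm y)\<^sup>2 / r\<^sup>2) * \<nu> y + (r / s)\<^sup>2 / r\<^sup>2 * ?k y)"
      using integrable_h_fun integrable_K_fun[OF r] by simp
    fix y :: 'a
    have "min 1 ((norm y)\<^sup>2 / s\<^sup>2) * \<nu> y
        \<le> (min 1 ((norm y)\<^sup>2 / r\<^sup>2) + (r / s)\<^sup>2 * (of_bool (norm y \<le> r) * (norm y)\<^sup>2 / r\<^sup>2)) * \<nu> y"
      using min_one_divide_square_le_add[OF assms norm_ge_zero] by (rule mult_right_mono[OF _ density_nonneg])
    then show "min 1 ((norm y)\<^sup>2 / s\<^sup>2) * \<nu> y \<le> min 1 ((norm y)\<^sup>2 / r\<^sup>2) * \<nu> y + (r / s)\<^sup>2 / r\<^sup>2 * ?k y"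
      by (simp add: indicator_def algebra_simps)
  qed (rule integrable_h_fun)
  also have "\<dots> = h_fun \<nu> r + (r / s)\<^sup>2 * K_fun \<nu> r"
    using integrable_h_fun integrable_K_fun[OF r] by (simp add: h_fun_def K_fun_def)
  finally show ?thesis .
qed

lemma h_fun_pos:
  assumes "0 < r"
  shows "0 < h_fun \<nu> r"
proof -
  obtain x0 where x0: "x0 \<noteq> 0" "0 < \<nu> x0" by (rule density_nontrivial)
  define \<rho> where "\<rho> = norm x0"
  define B where "B = ball ((1 / 2) *\<^sub>R x0) (\<rho> / 4)"
  define m where "m = min 1 ((\<rho> / 4)\<^sup>2 / r\<^sup>2)"
  have \<rho>: "0 < \<rho>" using x0 by (simp add: \<rho>_def)
  have m: "0 < m" using \<rho> assms by (simp add: m_def)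
  have in_B: "\<rho> / 4 < norm y \<and> norm y \<le> \<rho>" if "y \<in> B" for y
  proof -
    have "norm (y - (1 / 2) *\<^sub>R x0) < \<rho> / 4"
      using that by (simp add: B_def dist_norm norm_minus_commute)
    moreover have "norm ((1 / 2) *\<^sub>R x0) = \<rho> / 2" by (simp add: \<rho>_def)
    ultimately show ?thesis
      using norm_triangle_sub[of y "(1 / 2) *\<^sub>R x0"] norm_triangle_sub[of "(1 / 2) *\<^sub>R x0" y]
      by (simp add: norm_minus_commute)
  qed
  have lower: "m * \<nu> x0 * indicator B y \<le> min 1 ((norm y)\<^sup>2 / r\<^sup>2) * \<nu> y" for y
  proof (cases "y \<in> B")
    case True
    with in_B have y: "\<rho> / 4 < norm y" "norm y \<le> \<rho>" by auto
    have "\<nu> x0 \<le> \<nu> y" using y \<rho> by (intro density_antimono) (auto simp: \<rho>_def)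
    moreover have "m \<le> min 1 ((norm y)\<^sup>2 / r\<^sup>2)"
      using y \<rho> unfolding m_def by (intro min.mono divide_right_mono power_mono) auto
    ultimately show ?thesis using True m x0 by (simp add: mult_mono)
  qed (simp add: density_nonneg)
  have "0 < m * \<nu> x0 * measure lborel B"
    using m x0 \<rho> content_ball_pos by (simp add: B_def)
  also have "\<dots> = (\<integral>y. m * \<nu> x0 * indicator B y \<partial>lborel)" by simp
  also have "\<dots> \<le> h_fun \<nu> r"
    unfolding h_fun_def
  proof (rule integral_mono[OF _ integrable_h_fun lower])
    show "integrable lborel (\<lambda>y. m * \<nu> x0 * indicator B y)"
      unfolding B_def using emeasure_lborel_ball_finite
      by (intro integrable_mult_right integrable_real_indicator)
         (auto simp: top_ennreal.rep_eq infinity_ennreal_def)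
  qed
  finally show ?thesis .
qed

lemma psi_radial_pos:
  assumes "0 < x"
  shows "0 < psi_radial \<nu> x"
proof -
  have "0 < real DIM('a) * (12 * real DIM('a) + 2) * psi_radial \<nu> x"
    using h_fun_pos[of "1 / x"] h_fun_le_psi_radial[OF assms] assms by simp
  moreover have "0 < real DIM('a) * (12 * real DIM('a) + 2)" by simp
  ultimately show ?thesis by (rule zero_less_mult_pos)
qed

lemma h_fun_half_ge:
  assumes "0 < r" "0 \<le> \<epsilon>" "\<epsilon> * h_fun \<nu> (r / 2) \<le> K_fun \<nu> (r / 2)"
  shows "(1 + 3 * \<epsilon> / 4) * h_fun \<nu> r \<le> h_fun \<nu> (r / 2)"
proof -
  have "h_fun \<nu> r + 3 / 4 * K_fun \<nu> (r / 2) \<le> h_fun \<nu> (r / 2)"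
    using h_fun_add_K_fun_le[of "r / 2" r] assms(1) by (simp add: power_divide)
  moreover have "\<epsilon> * h_fun \<nu> r \<le> \<epsilon> * h_fun \<nu> (r / 2)"
    using h_fun_antimono[of "r / 2" r] assms(1,2) by (simp add: mult_left_mono)
  ultimately show ?thesis using assms(3) by (simp add: algebra_simps)
qed

lemma h_fun_doubling_if_Liminf_pos:
  assumes "0 < Liminf (at_right 0) (\<lambda>r. ereal (K_fun \<nu> r / h_fun \<nu> r))"
  obtains q \<delta> where "1 < q" "0 < \<delta>"
    "\<And>x. 1 / \<delta> < x \<Longrightarrow> q * h_fun \<nu> (1 / x) \<le> h_fun \<nu> (1 / (2 * x))"
proof -
  obtain \<epsilon> where \<epsilon>: "0 < \<epsilon>" "eventually (\<lambda>r. \<epsilon> < K_fun \<nu> r / h_fun \<nu> r) (at_right 0)"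
    using Liminf_ereal_pos_imp_eventually_gt[OF assms] by blast
  then obtain \<delta> where \<delta>: "0 < \<delta>" "\<And>r. 0 < r \<Longrightarrow> r < \<delta> \<Longrightarrow> \<epsilon> < K_fun \<nu> r / h_fun \<nu> r"
    unfolding eventually_at_right_field by auto
  have "(1 + 3 * \<epsilon> / 4) * h_fun \<nu> (1 / x) \<le> h_fun \<nu> (1 / (2 * x))" if "1 / \<delta> < x" for x
  proof -
    have "0 < 1 / \<delta>" using \<delta>(1) by simp
    then have "0 < x" using that by linarith
    then have r: "0 < 1 / x" "1 / x < \<delta>"
      using that \<delta>(1) by (simp_all add: divide_less_eq mult.commute)
    then have "\<epsilon> * h_fun \<nu> (1 / x / 2) \<le> K_fun \<nu> (1 / x / 2)"
      using \<delta>(2)[of "1 / x / 2"] h_fun_pos[of "1 / x / 2"] by (simp add: field_simps)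
    then show ?thesis using h_fun_half_ge[of "1 / x" \<epsilon>] r(1) \<epsilon>(1) by (simp add: mult.commute)
  qed
  moreover have "1 < 1 + 3 * \<epsilon> / 4" using \<epsilon>(1) by simp
  ultimately show thesis using that \<delta>(1) by blast
qed

lemma WLSC_psi_radial_if_Liminf_pos:
  assumes "0 < Liminf (at_right 0) (\<lambda>r. ereal (K_fun \<nu> r / h_fun \<nu> r))"
  shows "\<exists>c \<alpha> \<theta>. 0 < c \<and> c \<le> 1 \<and> 0 < \<alpha> \<and> 0 \<le> \<theta> \<and> WLSC (psi_radial \<nu>) \<alpha> \<theta> c"
proof -
  obtain q \<delta> where q: "1 < q" and \<delta>: "0 < \<delta>"
    and doubling: "\<And>x. 1 / \<delta> < x \<Longrightarrow> q * h_fun \<nu> (1 / x) \<le> h_fun \<nu> (1 / (2 * x))"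
    using h_fun_doubling_if_Liminf_pos[OF assms] by blast
  define C where "C = real DIM('a) * (12 * real DIM('a) + 2)"
  have "1 \<le> real DIM('a)" by simp
  then have C: "1 \<le> C"
    unfolding C_def using mult_mono[of 1 "real DIM('a)" 1 "12 * real DIM('a) + 2"] by simp
  have x_pos: "0 < x" if "1 / \<delta> < x" for x
  proof -
    have "0 < 1 / \<delta>" using \<delta> by simp
    then show ?thesis using that by linarith
  qed
  have "WLSC (\<lambda>x. h_fun \<nu> (1 / x)) (log 2 q) (1 / \<delta>) (1 / q)"
  proof (rule WLSC_of_doubling[OF q])
    show "0 \<le> 1 / \<delta>" using \<delta> by simp
    show "h_fun \<nu> (1 / x) \<le> h_fun \<nu> (1 / y)" if "1 / \<delta> < x" "x \<le> y" for x y
      using that x_pos[OF that(1)] by (intro h_fun_antimono) (auto simp: frac_le)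
    show "0 \<le> h_fun \<nu> (1 / x)" for x by (rule h_fun_nonneg)
  qed (rule doubling)
  then have "WLSC (psi_radial \<nu>) (log 2 q) (1 / \<delta>) (1 / q / (2 * C))"
  proof (rule WLSC_transfer)
    show "psi_radial \<nu> x \<le> 2 * h_fun \<nu> (1 / x)" if "1 / \<delta> < x" for x
      using psi_radial_le_h_fun x_pos[OF that] .
    show "h_fun \<nu> (1 / x) \<le> C * psi_radial \<nu> x" if "1 / \<delta> < x" for x
      using h_fun_le_psi_radial x_pos[OF that] unfolding C_def .
  qed (use q C \<delta> in auto)
  moreover have "1 \<le> 2 * q * C" using q C mult_mono[of 1 "2 * q" 1 C] by simp
  then have "0 < 1 / q / (2 * C)" "1 / q / (2 * C) \<le> 1" "0 < log 2 q"
    using q C by (auto simp: field_simps)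
  ultimately show ?thesis
    using \<delta> by (intro exI[of _ "1 / q / (2 * C)"] exI[of _ "log 2 q"] exI[of _ "1 / \<delta>"]) auto
qed

lemma Liminf_pos_if_WLSC_psi_radial:
  assumes "0 < c" "0 < \<alpha>" "0 \<le> \<theta>" and W: "WLSC (psi_radial \<nu>) \<alpha> \<theta> c"
  shows "0 < Liminf (at_right 0) (\<lambda>r. ereal (K_fun \<nu> r / h_fun \<nu> r))"
proof -
  define C where "C = real DIM('a) * (12 * real DIM('a) + 2)"
  have "WLSC (\<lambda>x. h_fun \<nu> (1 / x)) \<alpha> \<theta> (c / (C * 2))"
  proof (rule WLSC_transfer[OF W])
    show "h_fun \<nu> (1 / x) \<le> C * psi_radial \<nu> x" if "\<theta> < x" for x
      using h_fun_le_psi_radial that assms(3) unfolding C_def by simp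
    show "psi_radial \<nu> x \<le> 2 * h_fun \<nu> (1 / x)" if "\<theta> < x" for x
      using psi_radial_le_h_fun that assms(3) by simp
  qed (use assms in \<open>auto simp: C_def\<close>)
  moreover have "0 < c / (C * 2)" using assms(1) by (simp add: C_def)
  moreover note \<open>0 < \<alpha>\<close>
  moreover have "0 \<le> h_fun \<nu> (1 / x)" if "\<theta> < x" for x by (rule h_fun_nonneg)
  ultimately obtain \<kappa> where
    \<kappa>: "1 < \<kappa>" "\<And>x. \<theta> < x \<Longrightarrow> 2 * h_fun \<nu> (1 / x) \<le> h_fun \<nu> (1 / (\<kappa> * x))"
    by (rule WLSC_amplifies[where M = 2]) auto
  have bound: "h_fun \<nu> r \<le> \<kappa>\<^sup>2 * K_fun \<nu> r" if "0 < r" "r < 1 / (\<theta> + 1)" for r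
  proof -
    have "\<theta> < 1 / r" using that assms(3) by (simp add: field_simps)
    then have "2 * h_fun \<nu> r \<le> h_fun \<nu> (r / \<kappa>)" using \<kappa>(2)[of "1 / r"] by simp
    also have "\<dots> \<le> h_fun \<nu> r + (r / (r / \<kappa>))\<^sup>2 * K_fun \<nu> r"
      using that \<kappa>(1) by (intro h_fun_le_add_K_fun) (auto simp: field_simps)
    finally show ?thesis using that by simp
  qed
  have "eventually (\<lambda>r. 1 / \<kappa>\<^sup>2 \<le> K_fun \<nu> r / h_fun \<nu> r) (at_right 0)"
    unfolding eventually_at_right_field
  proof (intro exI[of _ "1 / (\<theta> + 1)"] conjI allI impI)
    show "0 < 1 / (\<theta> + 1)" using assms(3) by simp
    fix r :: real assume "0 < r" "r < 1 / (\<theta> + 1)"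
    then show "1 / \<kappa>\<^sup>2 \<le> K_fun \<nu> r / h_fun \<nu> r"
      using h_fun_pos[of r] bound[of r] \<kappa>(1) by (simp add: field_simps)
  qed
  then show ?thesis using \<kappa>(1) by (intro Liminf_ereal_pos_if_eventually_ge) auto
qed

lemma psi_radial_not_slowly_varying_if_Liminf_pos:
  assumes "0 < Liminf (at_right 0) (\<lambda>r. ereal (K_fun \<nu> r / h_fun \<nu> r))"
  shows "\<not> slowly_varying_at_infinity (psi_radial \<nu>)"
proof -
  obtain c \<alpha> \<theta> where c: "0 < c" and \<alpha>: "0 < \<alpha>" and \<theta>: "0 \<le> \<theta>"
    and W: "WLSC (psi_radial \<nu>) \<alpha> \<theta> c"
    using WLSC_psi_radial_if_Liminf_pos[OF assms] by blast
  show ?thesis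
  proof (rule WLSC_not_slowly_varying[OF W c \<alpha>])
    show "0 < psi_radial \<nu> x" if "\<theta> < x" for x
      using that \<theta> by (intro psi_radial_pos) simp
  qed
qed

end

theorem mainTheorem13:
  fixes \<nu> :: "'a::euclidean_space \<Rightarrow> real"
  assumes "isotropic_unimodal_levy_density \<nu>"
  shows "((\<exists>c \<alpha> \<theta>. 0 < c \<and> c \<le> 1 \<and> 0 < \<alpha> \<and> 0 \<le> \<theta> \<and> WLSC (psi_radial \<nu>) \<alpha> \<theta> c)
           \<longleftrightarrow> Liminf (at_right 0) (\<lambda>r. ereal (K_fun \<nu> r / h_fun \<nu> r)) > 0)
         \<and> (Liminf (at_right 0) (\<lambda>r. ereal (K_fun \<nu> r / h_fun \<nu> r)) > 0
              \<longrightarrow> \<not> slowly_varying_at_infinity (psi_radial \<nu>))"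
proof -
  interpret isotropic_unimodal_levy \<nu> by unfold_locales (rule assms)
  have "0 < Liminf (at_right 0) (\<lambda>r. ereal (K_fun \<nu> r / h_fun \<nu> r))"
    if "\<exists>c \<alpha> \<theta>. 0 < c \<and> c \<le> 1 \<and> 0 < \<alpha> \<and> 0 \<le> \<theta> \<and> WLSC (psi_radial \<nu>) \<alpha> \<theta> c"
    using that by (elim exE conjE) (rule Liminf_pos_if_WLSC_psi_radial)
  then show ?thesis
    using WLSC_psi_radial_if_Liminf_pos psi_radial_not_slowly_varying_if_Liminf_pos by blast
qed

end
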